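(* For $n\geq 2$ let $h_n$ be the number of ordered pairs of words $(w,z)$ over the alphabet $\{A,B,C,D\}$ satisfying: (i) both $w$ and $z$ start with the letter $A$, and $|w|+|z|=n$; (ii) $w$ and $z$ contain the same number of letters $A$; (iii) neither $w$ nor $z$ contains a $CB$-factor (a letter $C$ immediately followed by a letter $B$); (iv) for all $i$, if the $i$th letter $A$ from the right in $w$ is immediately preceded by a $C$ and immediately followed by a $B$, then the $i$th segment of $z$ from the left contains a letter $B$. Then there exists a positive constant $c$ such that $h_n\leq c\cdot 3.709381^n$ for all $n\geq 2$.
   Context: A segment of a word $v$ over $\{A,B,C,D\}$ is a factor (consecutive letters) that starts with a letter $A$ and ends immediately before the next letter $A$, or at the end of $v$. The $i$th segment from the left is the one starting at the $i$th letter $A$ from the left. The words $w$ and $z$ need not have the same length. *)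

theory Defs
  imports Complex_Main
begin

datatype letter = A | B | C | D

type_synonym word = "letter list"

definition A_positions :: "word \<Rightarrow> nat list" where
  "A_positions v = filter (\<lambda>j. v ! j = A) [0..<length v]"

text \<open>The (i+1)-th segment from the left (0-based index i): starts at the (i+1)-th A
  and ends immediately before the next A, or at the end of the word.\<close>
definition segment :: "word \<Rightarrow> nat \<Rightarrow> word" where
  "segment v i = (let ps = A_positions v; s = ps ! i;
                      e = (if Suc i < length ps then ps ! Suc i else length v)
                  in take (e - s) (drop s v))"

definition no_CB :: "word \<Rightarrow> bool" where
  "no_CB v \<longleftrightarrow> \<not> (\<exists>j. Suc j < length v \<and> v ! j = C \<and> v ! Suc j = B)"

text \<open>Condition (iv), with 0-based i: the (i+1)-th A from the right in w.\<close>
definition cond_iv :: "word \<Rightarrow> word \<Rightarrow> bool" where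
  "cond_iv w z \<longleftrightarrow> (\<forall>i < length (A_positions w).
     (let p = rev (A_positions w) ! i in
       (0 < p \<and> w ! (p - 1) = C \<and> Suc p < length w \<and> w ! Suc p = B)
         \<longrightarrow> B \<in> set (segment z i)))"

definition good_pair :: "nat \<Rightarrow> word \<Rightarrow> word \<Rightarrow> bool" where
  "good_pair n w z \<longleftrightarrow>
     w \<noteq> [] \<and> z \<noteq> [] \<and> hd w = A \<and> hd z = A \<and> length w + length z = n \<and>
     length (A_positions w) = length (A_positions z) \<and>
     no_CB w \<and> no_CB z \<and> cond_iv w z"

definition h :: "nat \<Rightarrow> nat" where
  "h n = card {(w, z). good_pair n w z}"

end

theory Submission
  imports Defs
begin

text \<open>
  Cut \<open>w\<close> and \<open>z\<close> at their letters \<open>A\<close> into segments \<open>A u\<^sub>1, \<dots>, A u\<^sub>k\<close> and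
  \<open>A y\<^sub>1, \<dots>, A y\<^sub>k\<close>. The interleaved word \<open>A u\<^sub>k A y\<^sub>1 A u\<^sub>k\<^sub>-\<^sub>1 A y\<^sub>2 \<dots> A u\<^sub>1 A y\<^sub>k\<close>
  has length \<open>n\<close> and determines the pair. Taking the segments of \<open>w\<close> in reverse order
  places the two segments of \<open>w\<close> adjacent to its \<open>i\<close>-th \<open>A\<close> from the right around the
  \<open>i\<close>-th segment of \<open>z\<close>, so conditions (iii) and (iv) become local and the interleaved
  words are accepted by a 14-state automaton. Its transfer matrix has spectral radius just
  below 3.709381, and a positive weight on the states that is a supersolution for this
  ratio bounds the number of accepted words of length \<open>n\<close> by a constant times \<open>3.709381\<^sup>n\<close>.
\<close>

definition join_segments :: "word list \<Rightarrow> word" where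
  "join_segments us = concat (map ((#) A) us)"

lemma join_segments_simps [simp]:
  "join_segments [] = []"
  "join_segments (u # us) = A # u @ join_segments us"
  "join_segments (us @ vs) = join_segments us @ join_segments vs"
  by (simp_all add: join_segments_def)

lemma length_join_segments_rev [simp]:
  "length (join_segments (rev us)) = length (join_segments us)"
  by (induction us) simp_all

lemma length_join_segments_splice [simp]:
  "length (join_segments (splice xs ys)) = length (join_segments xs) + length (join_segments ys)"
  by (induction xs ys rule: splice.induct) simp_all

lemma join_segments_split:
  assumes "j < length us"
  shows "join_segments us = join_segments (take j us) @ A # us ! j @ join_segments (drop (Suc j) us)"
proof -
  have "join_segments us = join_segments (take j us @ us ! j # drop (Suc j) us)"
    using id_take_nth_drop[OF assms] by (rule arg_cong)
  then show ?thesis by simp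
qed

lemma join_segments_exists:
  "w = [] \<or> hd w = A \<Longrightarrow> \<exists>us. (\<forall>u\<in>set us. A \<notin> set u) \<and> join_segments us = w"
proof (induction w rule: rev_induct)
  case Nil
  show ?case by (intro exI[of _ "[]"]) simp
next
  case (snoc x w)
  have "w = [] \<or> hd w = A"
    using snoc.prems by (cases w) auto
  then obtain us where us: "\<forall>u\<in>set us. A \<notin> set u" "join_segments us = w"
    using snoc.IH by blast
  show ?case
  proof (cases "x = A")
    case True
    then show ?thesis using us by (intro exI[of _ "us @ [[]]"]) simp
  next
    case False
    then have "us \<noteq> []" using snoc.prems us(2) by auto
    then obtain vs v where "us = vs @ [v]" by (metis rev_exhaust)
    then have "join_segments (vs @ [v @ [x]]) = w @ [x]" and "\<forall>u\<in>set (vs @ [v @ [x]]). A \<notin> set u"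
      using us False by auto
    then show ?thesis by blast
  qed
qed

lemma join_segments_inj:
  assumes "\<forall>u\<in>set us. A \<notin> set u" "\<forall>u\<in>set us'. A \<notin> set u"
    and "join_segments us = join_segments us'"
  shows "us = us'"
  using assms
proof (induction us arbitrary: us')
  case Nil
  then show ?case by (cases us') auto
next
  case (Cons u us)
  obtain u' us'' where us': "us' = u' # us''"
    using Cons.prems(3) by (cases us') auto
  have segment_prefix: "takeWhile (\<lambda>x. x \<noteq> A) (u @ join_segments vs) = u" if "A \<notin> set u" for u vs
  proof -
    have "takeWhile (\<lambda>x. x \<noteq> A) (join_segments vs) = []"
      by (cases vs) simp_all
    then show ?thesis
      using that by (subst takeWhile_append2) auto
  qed
  have "u @ join_segments us = u' @ join_segments us''"
    using Cons.prems(3) us' by simp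
  then have "takeWhile (\<lambda>x. x \<noteq> A) (u @ join_segments us) = takeWhile (\<lambda>x. x \<noteq> A) (u' @ join_segments us'')"
    by simp
  then have "u = u'"
    using Cons.prems(1,2) us' segment_prefix by simp
  moreover have "us = us''"
    using Cons.prems us' \<open>u = u'\<close> by (intro Cons.IH) auto
  ultimately show ?case using us' by simp
qed

lemma A_positions_append:
  "A_positions (xs @ ys) = A_positions xs @ map ((+) (length xs)) (A_positions ys)"
proof -
  have "map ((+) (length xs)) [0..<length ys] = [length xs..<length xs + length ys]"
    by (rule nth_equalityI) auto
  then have upt: "[0..<length (xs @ ys)] = [0..<length xs] @ map ((+) (length xs)) [0..<length ys]"
    by (simp add: upt_add_eq_append[of 0])
  have "filter (\<lambda>j. (xs @ ys) ! j = A) [0..<length xs] = filter (\<lambda>j. xs ! j = A) [0..<length xs]"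
    by (rule filter_cong) (auto simp: nth_append)
  then show ?thesis
    unfolding A_positions_def upt by (simp add: filter_map o_def nth_append)
qed

lemma A_positions_join_segments:
  assumes "\<forall>u\<in>set us. A \<notin> set u"
  shows "A_positions (join_segments us) = map (\<lambda>j. length (join_segments (take j us))) [0..<length us]"
  using assms
proof (induction us rule: rev_induct)
  case Nil
  show ?case by (simp add: A_positions_def)
next
  case (snoc u us)
  have "A_positions u = []"
    using snoc.prems unfolding A_positions_def by (auto simp: filter_empty_conv) (metis nth_mem)
  then have "A_positions (A # u) = [0]"
    using A_positions_append[of "[A]" u] by (simp add: A_positions_def)
  then have "A_positions (join_segments (us @ [u])) = A_positions (join_segments us) @ [length (join_segments us)]"
    by (simp add: A_positions_append)
  also have "\<dots> = map (\<lambda>j. length (join_segments (take j (us @ [u])))) [0..<length (us @ [u])]"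
    using snoc by simp
  finally show ?case .
qed

lemma segment_join_segments:
  assumes "\<forall>u\<in>set us. A \<notin> set u" and "i < length us"
  shows "segment (join_segments us) i = A # us ! i"
proof -
  define pos where "pos j = length (join_segments (take j us))" for j
  have ps: "A_positions (join_segments us) = map pos [0..<length us]"
    using A_positions_join_segments[OF assms(1)] by (simp add: pos_def)
  have next_pos: "(if Suc i < length us then pos (Suc i) else length (join_segments us)) = pos (Suc i)"
    using assms(2) by (simp add: pos_def)
  have "pos (Suc i) = pos i + Suc (length (us ! i))"
    using assms(2) by (simp add: pos_def take_Suc_conv_app_nth)
  moreover have drop_pos: "drop (pos i) (join_segments us) = A # us ! i @ join_segments (drop (Suc i) us)"
    using join_segments_split[OF assms(2)] by (simp add: pos_def)
  moreover have "Suc (length (us ! i)) \<le> length (join_segments us) - pos i"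
    using arg_cong[OF drop_pos, of length] by simp
  ultimately show ?thesis
    using assms(2) unfolding segment_def Let_def ps by (simp add: next_pos)
qed

lemma join_segments_nth_before_A:
  assumes "0 < j" and "j < length us"
  shows "join_segments us ! (length (join_segments (take j us)) - 1) = last (A # us ! (j - 1))"
proof -
  define u where "u = us ! (j - 1)"
  define xs where "xs = join_segments (take (j - 1) us)"
  have "join_segments (take j us) = xs @ A # u"
    using assms take_Suc_conv_app_nth[of "j - 1" us] by (simp add: xs_def u_def)
  then show ?thesis
    using join_segments_split[OF assms(2)] u_def by (simp add: nth_append last_conv_nth)
qed

lemma join_segments_nth_after_A:
  assumes "j < length us" and "us ! j \<noteq> []"
  shows "Suc (length (join_segments (take j us))) < length (join_segments us)
    \<and> join_segments us ! Suc (length (join_segments (take j us))) = hd (us ! j)"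
proof -
  obtain c u where "us ! j = c # u"
    using assms(2) by (cases "us ! j") auto
  then show ?thesis
    using join_segments_split[OF assms(1)] by (simp add: nth_append)
qed

text \<open>Condition (iv) for the segments \<open>vs\<close> of \<open>w\<close> listed from the right and the segments
  \<open>ys\<close> of \<open>z\<close> from the left, all without their leading \<open>A\<close>: the \<open>A\<close> in front of \<open>v\<close>
  is preceded by the last letter of \<open>A # hd vs\<close>.\<close>

fun cond_iv_segments :: "word list \<Rightarrow> word list \<Rightarrow> bool" where
  "cond_iv_segments (v # vs) (y # ys) \<longleftrightarrow>
     (vs \<noteq> [] \<and> last (A # hd vs) = C \<and> v \<noteq> [] \<and> hd v = B \<longrightarrow> B \<in> set y) \<and>
     cond_iv_segments vs ys"
| "cond_iv_segments _ _ \<longleftrightarrow> True"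

lemma cond_iv_segments_if_nth:
  assumes "\<And>i. Suc i < length vs \<Longrightarrow> last (A # vs ! Suc i) = C \<Longrightarrow> vs ! i \<noteq> [] \<Longrightarrow>
      hd (vs ! i) = B \<Longrightarrow> B \<in> set (ys ! i)"
  shows "cond_iv_segments vs ys"
  using assms
proof (induction vs ys rule: cond_iv_segments.induct)
  case (1 v vs y ys)
  have "B \<in> set y" if "vs \<noteq> []" "last (A # hd vs) = C" "v \<noteq> []" "hd v = B"
    using 1(2)[of 0] that by (simp add: hd_conv_nth)
  moreover have "cond_iv_segments vs ys"
    using 1 by (metis Suc_less_eq length_Cons nth_Cons_Suc)
  ultimately show ?case by simp
qed simp_all

lemma cond_iv_segments_if_cond_iv:
  assumes us_free: "\<forall>u\<in>set us. A \<notin> set u" and ys_free: "\<forall>y\<in>set ys. A \<notin> set y"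
    and len: "length us = length ys"
    and cond: "cond_iv (join_segments us) (join_segments ys)"
  shows "cond_iv_segments (rev us) ys"
proof (rule cond_iv_segments_if_nth)
  fix i
  assume i: "Suc i < length (rev us)" and before: "last (A # rev us ! Suc i) = C"
    and "rev us ! i \<noteq> []" and after: "hd (rev us ! i) = B"
  define j where "j = length us - Suc i"
  define p where "p = length (join_segments (take j us))"
  have j: "0 < j" "j < length us"
    using i by (auto simp: j_def)
  have rev_us: "rev us ! i = us ! j" "rev us ! Suc i = us ! (j - 1)"
    using i by (simp_all add: rev_nth j_def)
  have "take j us \<noteq> []"
    using j by auto
  then have "0 < p"
    unfolding p_def by (cases "take j us") simp_all
  moreover have "join_segments us ! (p - 1) = C"
    using join_segments_nth_before_A[OF j] before rev_us by (simp add: p_def)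
  moreover have "Suc p < length (join_segments us) \<and> join_segments us ! Suc p = B"
    using join_segments_nth_after_A[OF j(2)] \<open>rev us ! i \<noteq> []\<close> after rev_us by (simp add: p_def)
  moreover have "i < length (A_positions (join_segments us))"
    and "rev (A_positions (join_segments us)) ! i = p"
    using i j(2) by (simp_all add: A_positions_join_segments[OF us_free] rev_nth flip: j_def p_def)
  ultimately have "B \<in> set (segment (join_segments ys) i)"
    using cond unfolding cond_iv_def Let_def by auto
  then show "B \<in> set (ys ! i)"
    using segment_join_segments[OF ys_free] i len by simp
qed

lemma no_CB_Nil [simp]: "no_CB []"
  by (simp add: no_CB_def)

lemma no_CB_Cons:
  "no_CB (x # v) \<longleftrightarrow> \<not> (x = C \<and> v \<noteq> [] \<and> hd v = B) \<and> no_CB v"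
proof -
  have ex_split: "(\<exists>j. P j) \<longleftrightarrow> P 0 \<or> (\<exists>j. P (Suc j))" for P :: "nat \<Rightarrow> bool"
    by (metis not0_implies_Suc)
  show ?thesis
    unfolding no_CB_def ex_split[of "\<lambda>j. Suc j < length (x # v) \<and> (x # v) ! j = C \<and> (x # v) ! Suc j = B"]
    by (cases v) auto
qed

lemma no_CB_append:
  "no_CB (xs @ ys) \<longleftrightarrow> no_CB xs \<and> no_CB ys \<and> \<not> (xs \<noteq> [] \<and> ys \<noteq> [] \<and> last xs = C \<and> hd ys = B)"
proof (induction xs)
  case Nil
  then show ?case by simp
next
  case (Cons x xs)
  then show ?case by (cases xs) (auto simp: no_CB_Cons)
qed

lemma no_CB_join_segments:
  "no_CB (join_segments us) \<Longrightarrow> \<forall>u\<in>set us. no_CB u"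
  by (induction us) (simp_all add: no_CB_Cons no_CB_append)

fun run :: "('s \<Rightarrow> 'a \<Rightarrow> 's option) \<Rightarrow> 's \<Rightarrow> 'a list \<Rightarrow> 's option" where
  "run \<delta> q [] = Some q"
| "run \<delta> q (a # s) = Option.bind (\<delta> q a) (\<lambda>q'. run \<delta> q' s)"

lemma run_append: "run \<delta> q (s @ t) = Option.bind (run \<delta> q s) (\<lambda>q'. run \<delta> q' t)"
  by (induction s arbitrary: q) (simp_all split: Option.bind_split)

lemma finite_lists_length:
  "finite {s :: 'a::finite list. length s = n \<and> P s}"
  using finite_lists_length_eq[of "UNIV :: 'a set" n] by (rule rev_finite_subset) auto

lemma card_lists_length_Suc:
  "card {s :: 'a::finite list. length s = Suc n \<and> P s} = (\<Sum>a\<in>UNIV. card {s. length s = n \<and> P (a # s)})"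
proof -
  have "{s. length s = Suc n \<and> P s} = (\<Union>a. (#) a ` {s. length s = n \<and> P (a # s)})"
    by (auto simp: length_Suc_conv)
  also have "card \<dots> = (\<Sum>a\<in>UNIV. card ((#) a ` {s. length s = n \<and> P (a # s)}))"
    by (rule card_UN_disjoint) (auto simp: finite_lists_length)
  finally show ?thesis
    by (simp add: card_image)
qed

lemma card_runs_le:
  fixes \<delta> :: "'s \<Rightarrow> 'a::finite \<Rightarrow> 's option" and f :: "'s \<Rightarrow> real"
  assumes f_ge_1: "\<And>q. 1 \<le> f q"
    and supersolution: "\<And>q. (\<Sum>a\<in>UNIV. case \<delta> q a of None \<Rightarrow> 0 | Some q' \<Rightarrow> f q') \<le> r * f q"
  shows "real (card {s. length s = n \<and> run \<delta> q s \<noteq> None}) \<le> f q * r ^ n"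
proof (induction n arbitrary: q)
  case 0
  have "{s. length s = 0 \<and> run \<delta> q s \<noteq> None} = {[]}"
    by auto
  then show ?case
    using f_ge_1[of q] by simp
next
  case (Suc n)
  let ?f' = "\<lambda>a. case \<delta> q a of None \<Rightarrow> 0 | Some q' \<Rightarrow> f q'"
  have "0 \<le> sum ?f' UNIV"
    using f_ge_1 by (intro sum_nonneg) (auto split: option.split intro: order_trans[OF zero_le_one])
  then have "0 \<le> r * f q"
    using supersolution[of q] by linarith
  then have "0 \<le> r"
    using f_ge_1[of q] by (simp add: zero_le_mult_iff)
  have "real (card {s. length s = Suc n \<and> run \<delta> q s \<noteq> None})
      = (\<Sum>a\<in>UNIV. real (card {s. length s = n \<and> run \<delta> q (a # s) \<noteq> None}))"
    by (simp add: card_lists_length_Suc)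
  also have "\<dots> \<le> (\<Sum>a\<in>UNIV. ?f' a * r ^ n)"
    using Suc.IH by (intro sum_mono) (simp split: option.split)
  also have "\<dots> = sum ?f' UNIV * r ^ n"
    by (simp add: sum_distrib_right)
  also have "\<dots> \<le> r * f q * r ^ n"
    using supersolution \<open>0 \<le> r\<close> by (simp add: mult_right_mono)
  finally show ?case
    by (simp add: mult_ac)
qed

text \<open>\<open>W_start\<close> and \<open>W_seg\<close> read a segment of \<open>w\<close>, \<open>Z_seg\<close> one of \<open>z\<close>. The first flag
  \<open>p\<close> records that the segment of \<open>w\<close> preceding the current (or last) segment of \<open>z\<close>
  began with \<open>B\<close> while that segment of \<open>z\<close> has no \<open>B\<close> (so far): then the next segment
  of \<open>w\<close> must not end with \<open>C\<close>. In \<open>W_seg p b c\<close> the flag \<open>b\<close> records that the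
  current segment began with \<open>B\<close>. The last flag records that the previous letter was \<open>C\<close>.\<close>

datatype state = W_start bool | W_seg bool bool bool | Z_seg bool bool

fun step :: "state \<Rightarrow> letter \<Rightarrow> state option" where
  "step (W_start p) a = (case a of
      A \<Rightarrow> Some (Z_seg False False)
    | B \<Rightarrow> Some (W_seg p True False)
    | C \<Rightarrow> Some (W_seg p False True)
    | D \<Rightarrow> Some (W_seg p False False))"
| "step (W_seg p b c) a = (case a of
      A \<Rightarrow> (if p \<and> c then None else Some (Z_seg b False))
    | B \<Rightarrow> (if c then None else Some (W_seg p b False))
    | C \<Rightarrow> Some (W_seg p b True)
    | D \<Rightarrow> Some (W_seg p b False))"
| "step (Z_seg p c) a = (case a of
      A \<Rightarrow> Some (W_start p)
    | B \<Rightarrow> (if c then None else Some (Z_seg False False))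
    | C \<Rightarrow> Some (Z_seg p True)
    | D \<Rightarrow> Some (Z_seg p False))"

lemma run_Z_seg:
  assumes "A \<notin> set y" and "no_CB y" and "\<not> (c \<and> y \<noteq> [] \<and> hd y = B)"
  shows "run step (Z_seg p c) y = Some (Z_seg (p \<and> B \<notin> set y) (if y = [] then c else last y = C))"
  using assms
proof (induction y arbitrary: p c)
  case (Cons a y)
  then show ?case
    by (cases a) (auto simp: no_CB_Cons)
qed simp

lemma run_W_seg:
  assumes "A \<notin> set v" and "no_CB v" and "\<not> (c \<and> v \<noteq> [] \<and> hd v = B)"
  shows "run step (W_seg p b c) v = Some (W_seg p b (if v = [] then c else last v = C))"
  using assms
proof (induction v arbitrary: c)
  case (Cons a v)
  then show ?case
    by (cases a) (auto simp: no_CB_Cons)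
qed simp

lemma run_W_start:
  assumes "A \<notin> set v" and "no_CB v" and "\<not> (p \<and> last (A # v) = C)"
  shows "run step (W_start p) (v @ [A]) = Some (Z_seg (v \<noteq> [] \<and> hd v = B) False)"
proof (cases v)
  case (Cons a v')
  then have "a \<noteq> A" "\<not> (a = C \<and> v' \<noteq> [] \<and> hd v' = B)" "A \<notin> set v'" "no_CB v'"
    using assms(1,2) by (auto simp: no_CB_Cons)
  then have "run step (W_start p) v = Some (W_seg p (a = B) (last v = C))"
    using Cons run_W_seg[of v' "a = C" p "a = B"] by (cases a) auto
  moreover have "run step (W_start p) (v @ [A]) = Option.bind (run step (W_start p) v) (\<lambda>q. step q A)"
    by (simp add: run_append)
  moreover have "v \<noteq> []" "hd v = a"
    using Cons by simp_all
  ultimately show ?thesis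
    using assms(3) by auto
qed simp

lemma run_join_segments_splice:
  assumes "length vs = length ys"
    and "\<forall>v\<in>set vs. A \<notin> set v \<and> no_CB v" and "\<forall>y\<in>set ys. A \<notin> set y \<and> no_CB y"
    and "cond_iv_segments vs ys" and "\<not> (p \<and> vs \<noteq> [] \<and> last (A # hd vs) = C)"
  shows "run step (Z_seg p c) (join_segments (splice vs ys)) \<noteq> None"
  using assms
proof (induction vs arbitrary: ys p c)
  case Nil
  then show ?case by simp
next
  case (Cons v vs)
  obtain y ys' where ys: "ys = y # ys'"
    using Cons.prems(1) by (cases ys) auto
  define b where "b = (v \<noteq> [] \<and> hd v = B)"
  have start: "run step (Z_seg p c) (A # v @ [A]) = Some (Z_seg b False)"
    using run_W_start[of v p] Cons.prems(2,5) by (simp add: b_def)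
  have z_seg: "run step (Z_seg b False) y = Some (Z_seg (b \<and> B \<notin> set y) (if y = [] then False else last y = C))"
    using run_Z_seg[of y False b] Cons.prems(3) ys by simp
  have "run step (Z_seg (b \<and> B \<notin> set y) c') (join_segments (splice vs ys')) \<noteq> None" for c'
    by (rule Cons.IH) (use Cons.prems ys in \<open>auto simp: b_def\<close>)
  moreover have "join_segments (splice (v # vs) ys) = (A # v @ [A]) @ y @ join_segments (splice vs ys')"
    using ys by simp
  ultimately show ?case
    by (simp only: run_append start z_seg Option.bind.simps not_False_eq_True)
qed

text \<open>A rescaled approximate Perron eigenvector of the transfer matrix of \<open>step\<close>, rounded
  so that the supersolution inequality holds exactly.\<close>

fun weight :: "state \<Rightarrow> real" where
  "weight (W_start False) = 4204066904"
| "weight (W_start True) = 3070706097"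
| "weight (W_seg False False False) = 4386649587"
| "weight (W_seg False False True) = 3204066904"
| "weight (W_seg False True False) = 3709380876"
| "weight (W_seg False True True) = 2709380876"
| "weight (W_seg True False False) = 3204066904"
| "weight (W_seg True False True) = 1182582683"
| "weight (W_seg True True False) = 2709380876"
| "weight (W_seg True True True) = 1000000001"
| "weight (Z_seg False False) = 4294388006"
| "weight (Z_seg False True) = 3136677825"
| "weight (Z_seg True False) = 3631363853"
| "weight (Z_seg True True) = 2473653672"

lemma UNIV_letter: "(UNIV :: letter set) = {A, B, C, D}"
  using letter.exhaust by auto

instance letter :: finite
  by standard (simp add: UNIV_letter)

lemma weight_ge_1: "1 \<le> weight q"
  by (cases q rule: weight.cases) simp_all

lemma weight_supersolution:
  "(\<Sum>a\<in>UNIV. case step q a of None \<Rightarrow> 0 | Some q' \<Rightarrow> weight q') \<le> 3.709381 * weight q"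
  by (cases q rule: weight.cases) (simp_all add: UNIV_letter)

lemma set_splice: "set (splice xs ys) = set xs \<union> set ys"
  by (rule set_shuffles) simp

definition interleave_segments :: "word list \<Rightarrow> word list \<Rightarrow> word" where
  "interleave_segments us ys = join_segments (splice (rev us) ys)"

lemma splice_inj:
  assumes "length xs = length ys" and "length xs' = length ys'" and "splice xs ys = splice xs' ys'"
  shows "xs = xs' \<and> ys = ys'"
  using assms
proof (induction xs arbitrary: ys xs' ys')
  case Nil
  then show ?case by (cases xs') auto
next
  case (Cons x xs)
  obtain y ys1 where ys: "ys = y # ys1"
    using Cons.prems(1) by (cases ys) auto
  obtain x' xs1 y' ys1' where xs': "xs' = x' # xs1" and ys': "ys' = y' # ys1'"
    using Cons.prems ys by (cases xs'; cases ys') auto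
  have "x = x' \<and> y = y' \<and> splice xs ys1 = splice xs1 ys1'"
    using Cons.prems(3) ys xs' ys' by simp
  then show ?case
    using Cons.IH[of ys1 xs1 ys1'] Cons.prems(1,2) ys xs' ys' by simp
qed

lemma interleave_segments_inj:
  assumes "\<forall>u\<in>set us \<union> set ys \<union> set us' \<union> set ys'. A \<notin> set u"
    and "length us = length ys" and "length us' = length ys'"
    and "interleave_segments us ys = interleave_segments us' ys'"
  shows "us = us' \<and> ys = ys'"
proof -
  have "splice (rev us) ys = splice (rev us') ys'"
    using assms(1,4) unfolding interleave_segments_def
    by (intro join_segments_inj) (auto simp: set_splice)
  then show ?thesis
    using splice_inj[of "rev us" ys "rev us'" ys'] assms(2,3) by simp
qed

lemma good_pair_encoding:
  assumes "good_pair n w z"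
  obtains us ys where "\<forall>u\<in>set us \<union> set ys. A \<notin> set u" and "length us = length ys"
    and "w = join_segments us" and "z = join_segments ys"
    and "length (interleave_segments us ys) = n"
    and "run step (Z_seg False False) (interleave_segments us ys) \<noteq> None"
proof -
  have good: "hd w = A" "hd z = A" "length w + length z = n"
    "length (A_positions w) = length (A_positions z)"
    "no_CB w" "no_CB z" "cond_iv w z"
    using assms unfolding good_pair_def by auto
  obtain us where us: "\<forall>u\<in>set us. A \<notin> set u" and w: "w = join_segments us"
    using join_segments_exists good(1) by metis
  obtain ys where ys: "\<forall>y\<in>set ys. A \<notin> set y" and z: "z = join_segments ys"
    using join_segments_exists good(2) by metis
  have len: "length us = length ys"
    using good(4) by (simp add: w z A_positions_join_segments[OF us] A_positions_join_segments[OF ys])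
  have "\<forall>v\<in>set (rev us). A \<notin> set v \<and> no_CB v" "\<forall>y\<in>set ys. A \<notin> set y \<and> no_CB y"
    using us ys no_CB_join_segments good(5,6) by (simp_all add: w z)
  moreover have "cond_iv_segments (rev us) ys"
    using cond_iv_segments_if_cond_iv[OF us ys len] good(7) by (simp add: w z)
  ultimately have "run step (Z_seg False False) (join_segments (splice (rev us) ys)) \<noteq> None"
    using len by (intro run_join_segments_splice) simp_all
  moreover have "length (join_segments (splice (rev us) ys)) = n"
    using good(3) by (simp add: w z)
  ultimately show ?thesis
    using that us ys len w z unfolding interleave_segments_def by blast
qed

lemma h_le_card_runs: "h n \<le> card {s. length s = n \<and> run step (Z_seg False False) s \<noteq> None}"
proof -
  define encodes where "encodes p s \<longleftrightarrow> (\<exists>us ys. (\<forall>u\<in>set us \<union> set ys. A \<notin> set u) \<and>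
    length us = length ys \<and> p = (join_segments us, join_segments ys) \<and> s = interleave_segments us ys)"
    for p :: "word \<times> word" and s
  have "card {(w, z). good_pair n w z} \<le> card {s. length s = n \<and> run step (Z_seg False False) s \<noteq> None}"
  proof (rule card_le_if_inj_on_rel[where r = encodes])
    show "finite {s. length s = n \<and> run step (Z_seg False False) s \<noteq> None}"
      by (rule finite_lists_length)
  next
    fix p
    assume "p \<in> {(w, z). good_pair n w z}"
    then obtain w z where "p = (w, z)" "good_pair n w z"
      by blast
    then show "\<exists>s. s \<in> {s. length s = n \<and> run step (Z_seg False False) s \<noteq> None} \<and> encodes p s"
      unfolding encodes_def by (elim good_pair_encoding) blast
  next
    fix p p' s
    assume "encodes p s" "encodes p' s"
    then obtain us ys us' ys' where
      "\<forall>u\<in>set us \<union> set ys. A \<notin> set u" "\<forall>u\<in>set us' \<union> set ys'. A \<notin> set u"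
      "length us = length ys" "length us' = length ys'"
      "p = (join_segments us, join_segments ys)" "p' = (join_segments us', join_segments ys')"
      "s = interleave_segments us ys" "s = interleave_segments us' ys'"
      unfolding encodes_def by blast
    then show "p = p'"
      using interleave_segments_inj[of us ys us' ys'] by auto
  qed
  then show ?thesis
    by (simp add: h_def)
qed

theorem corollary3p4:
  shows "\<exists>c::real. c > 0 \<and> (\<forall>n\<ge>2. real (h n) \<le> c * 3.709381 ^ n)"
proof (intro exI[of _ "weight (Z_seg False False)"] conjI allI impI)
  show "0 < weight (Z_seg False False)"
    by simp
  fix n :: nat
  have "real (h n) \<le> real (card {s. length s = n \<and> run step (Z_seg False False) s \<noteq> None})"
    using h_le_card_runs by simp
  also have "\<dots> \<le> weight (Z_seg False False) * 3.709381 ^ n"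
    by (rule card_runs_le[OF weight_ge_1 weight_supersolution])
  finally show "real (h n) \<le> weight (Z_seg False False) * 3.709381 ^ n" .
qed

end
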